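(* Let $h=8/15$, $a=3/15$, and for $p,q,r\in(0,1/36)$ let $K_{pqr}$ be the attractor of $\mathcal S_{pqr}=\{S_1,\dots,S_6\}$ with $S_1(x)=px$, $S_2(x)=a+rx$, $S_3(x)=h-qx$, $S_4(x)=h-r+rx$, $S_5(x)=1-a-rx$, $S_6(x)=1-r+rx$. Say $\mathcal S_{pqr}$ has unique one-point intersection if $S_3(K_{pqr})\cap S_4(K_{pqr})=\{h\}$. Then for each $r\in(0,1/36)$, the set of $(p,q)\in(0,r)^2$ for which $\mathcal S_{pqr}$ has unique one-point intersection has full Lebesgue measure in $(0,r)^2$, and for each $p\in(0,r)$ the set of $q\in(0,r)$ for which $\mathcal S_{pqr}$ has unique one-point intersection has full Lebesgue measure in $(0,r)$.
   Context: By construction, all pieces $S_i(K_{pqr})$, $i=1,\dots,6$, are pairwise disjoint except possibly $S_3(K_{pqr})$ and $S_4(K_{pqr})$, whose intersection always contains $h$. *)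

theory Defs
  imports "HOL-Analysis.Analysis"
begin

definition attractor :: "(real \<Rightarrow> real) set \<Rightarrow> real set" where
  "attractor F = (THE K. compact K \<and> K \<noteq> {} \<and> K = (\<Union>f\<in>F. f ` K))"

definition hh :: real where "hh = 8/15"
definition aa :: real where "aa = 3/15"

definition S1 :: "real \<Rightarrow> real \<Rightarrow> real \<Rightarrow> real \<Rightarrow> real" where "S1 p q r x = p * x"
definition S2 :: "real \<Rightarrow> real \<Rightarrow> real \<Rightarrow> real \<Rightarrow> real" where "S2 p q r x = aa + r * x"
definition S3 :: "real \<Rightarrow> real \<Rightarrow> real \<Rightarrow> real \<Rightarrow> real" where "S3 p q r x = hh - q * x"
definition S4 :: "real \<Rightarrow> real \<Rightarrow> real \<Rightarrow> real \<Rightarrow> real" where "S4 p q r x = hh - r + r * x"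
definition S5 :: "real \<Rightarrow> real \<Rightarrow> real \<Rightarrow> real \<Rightarrow> real" where "S5 p q r x = 1 - aa - r * x"
definition S6 :: "real \<Rightarrow> real \<Rightarrow> real \<Rightarrow> real \<Rightarrow> real" where "S6 p q r x = 1 - r + r * x"

definition K_pqr :: "real \<Rightarrow> real \<Rightarrow> real \<Rightarrow> real set" where
  "K_pqr p q r = attractor {S1 p q r, S2 p q r, S3 p q r, S4 p q r, S5 p q r, S6 p q r}"

definition unique_one_point :: "real \<Rightarrow> real \<Rightarrow> real \<Rightarrow> bool" where
  "unique_one_point p q r \<longleftrightarrow> S3 p q r ` K_pqr p q r \<inter> S4 p q r ` K_pqr p q r = {hh}"

end

theory Submission
  imports Defs
begin

(*
  If S3(K) and S4(K) meet in a point other than h = S3(0) = S4(1), then h - q x = h - r + r y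
  with x, y in K, x > 0 and y < 1.  Near 0 only S1 acts on K and near 1 only S6, so zooming in
  rewrites this as q p^n x' = r^(m+1) (1 - y') with x' >= a and y' <= 1 - a.  Approximating x'
  and y' by the images of 0 under the 6^k compositions of length k, this coincidence forces
  (p, q) into one of 36^k cells.  For fixed p, each cell confines q to an interval of length
  O(r^(k+1)): the images of 0 depend on q with Lipschitz constant 36/35, whereas the left-hand
  side grows in q at rate p^n x' >= p^n / 5 (transversality).  So for every k the p-sections of
  the exceptional set have measure O((36 r)^k), hence zero as 36 r < 1, and Tonelli's theorem
  gives the planar statement.
*)

definition hutchinson :: "('a \<Rightarrow> 'a) set \<Rightarrow> 'a set \<Rightarrow> 'a set" where
  "hutchinson F A = (\<Union>f\<in>F. f ` A)"

lemma hutchinson_mono: "A \<subseteq> B \<Longrightarrow> hutchinson F A \<subseteq> hutchinson F B"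
  unfolding hutchinson_def by blast

lemma subset_of_contraction_invariant:
  fixes A B :: "'a::metric_space set"
  assumes lip: "\<And>f. f \<in> F \<Longrightarrow> c-lipschitz_on UNIV f" and "c < 1"
    and A: "A \<subseteq> hutchinson F A" and B: "hutchinson F B \<subseteq> B"
    and "bounded A" "bounded B" "closed B" "B \<noteq> {}"
  shows "A \<subseteq> B"
proof
  fix x assume "x \<in> A"
  then obtain f0 where "f0 \<in> F" using A unfolding hutchinson_def by blast
  then have c: "0 \<le> c" using lip lipschitz_on_nonneg by blast
  obtain R where R: "\<And>x y. x \<in> A \<Longrightarrow> y \<in> B \<Longrightarrow> dist x y \<le> R"
    using \<open>bounded A\<close> \<open>bounded B\<close> bounded_Un[of A B] unfolding bounded_two_points by blast
  have approx: "\<exists>y\<in>B. dist x y \<le> c ^ k * R" if "x \<in> A" for k x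
    using that
  proof (induction k arbitrary: x)
    case 0
    then show ?case using \<open>B \<noteq> {}\<close> R by auto
  next
    case (Suc k)
    obtain f x0 where f: "f \<in> F" "x0 \<in> A" "x = f x0"
      using Suc.prems A unfolding hutchinson_def by blast
    obtain y0 where y0: "y0 \<in> B" "dist x0 y0 \<le> c ^ k * R"
      using Suc.IH[OF f(2)] by blast
    have "f y0 \<in> B" using B f(1) y0(1) unfolding hutchinson_def by blast
    moreover have "dist x (f y0) \<le> c * dist x0 y0"
      using lip[OF f(1)] f(3) by (simp add: lipschitz_on_def)
    moreover have "c * dist x0 y0 \<le> c * (c ^ k * R)"
      using y0(2) c by (rule mult_left_mono)
    ultimately show ?case by (auto simp: mult.assoc intro!: bexI[of _ "f y0"])
  qed
  have "\<exists>y\<in>B. dist y x < e" if "e > 0" for e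
  proof -
    have "(\<lambda>k. c ^ k * R) \<longlonglongrightarrow> 0"
      using c \<open>c < 1\<close> by (intro tendsto_mult_left_zero LIMSEQ_power_zero) auto
    then obtain k where "c ^ k * R < e"
      using \<open>e > 0\<close> by (metis LIMSEQ_le_const linorder_not_le order.refl)
    moreover obtain y where "y \<in> B" "dist x y \<le> c ^ k * R" using approx[OF \<open>x \<in> A\<close>] by blast
    ultimately show ?thesis by (auto simp: dist_commute intro!: bexI[of _ y])
  qed
  then show "x \<in> B" using \<open>closed B\<close> closed_approachable by blast
qed

lemma attractor_eqI:
  fixes F :: "(real \<Rightarrow> real) set"
  assumes lip: "\<And>f. f \<in> F \<Longrightarrow> c-lipschitz_on UNIV f" and "c < 1"
    and K: "compact K" "K \<noteq> {}" "hutchinson F K = K"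
  shows "attractor F = K"
  unfolding attractor_def
proof (rule the_equality)
  show "compact K \<and> K \<noteq> {} \<and> K = (\<Union>f\<in>F. f ` K)"
    using K unfolding hutchinson_def by simp
next
  fix L assume "compact L \<and> L \<noteq> {} \<and> L = (\<Union>f\<in>F. f ` L)"
  then have L: "compact L" "L \<noteq> {}" "hutchinson F L = L" unfolding hutchinson_def by auto
  have "L \<subseteq> K" "K \<subseteq> L"
    by (rule subset_of_contraction_invariant[where F = F and c = c];
        use lip \<open>c < 1\<close> K L in \<open>auto simp: compact_imp_bounded compact_imp_closed\<close>)+
  then show "L = K" by blast
qed

lemma INT_UN_antimono_finite:
  fixes B :: "'i \<Rightarrow> nat \<Rightarrow> 'a set"
  assumes "finite I" and antimono: "\<And>i m n. i \<in> I \<Longrightarrow> m \<le> n \<Longrightarrow> B i n \<subseteq> B i m"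
  shows "(\<Inter>k. \<Union>i\<in>I. B i k) = (\<Union>i\<in>I. \<Inter>k. B i k)"
proof
  show "(\<Inter>k. \<Union>i\<in>I. B i k) \<subseteq> (\<Union>i\<in>I. \<Inter>k. B i k)"
  proof (rule subsetI, rule ccontr)
    fix x assume x: "x \<in> (\<Inter>k. \<Union>i\<in>I. B i k)" and "x \<notin> (\<Union>i\<in>I. \<Inter>k. B i k)"
    then have "\<forall>i\<in>I. \<exists>k. x \<notin> B i k" by blast
    then obtain k where k: "\<forall>i\<in>I. x \<notin> B i (k i)" by (rule bchoice[elim_format]) blast
    have "x \<in> (\<Union>i\<in>I. B i (Max (k ` I)))" using x by blast
    then obtain i where "i \<in> I" "x \<in> B i (Max (k ` I))" by blast
    moreover have "k i \<le> Max (k ` I)" using \<open>finite I\<close> \<open>i \<in> I\<close> by simp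
    ultimately show False using k antimono by blast
  qed
qed blast

lemma hutchinson_iterates_antimono:
  assumes "hutchinson F X \<subseteq> X" "m \<le> n"
  shows "(hutchinson F ^^ n) X \<subseteq> (hutchinson F ^^ m) X"
proof -
  have "(hutchinson F ^^ Suc k) X \<subseteq> (hutchinson F ^^ k) X" for k
    by (induction k) (use assms(1) hutchinson_mono in simp_all)
  then show ?thesis using assms(2) by (rule lift_Suc_antimono_le)
qed

lemma compact_hutchinson:
  assumes "finite F" "\<And>f. f \<in> F \<Longrightarrow> continuous_on UNIV f" "compact A"
  shows "compact (hutchinson F A)"
  unfolding hutchinson_def
  using assms by (intro compact_UN compact_continuous_image) (auto intro: continuous_on_subset)

text \<open>Injectivity lets the images commute with the intersection of the iterates.\<close>
lemma hutchinson_Inter_iterates: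
  assumes "finite F" "\<And>f. f \<in> F \<Longrightarrow> inj f" "hutchinson F X \<subseteq> X"
  shows "hutchinson F (\<Inter>k. (hutchinson F ^^ k) X) = (\<Inter>k. (hutchinson F ^^ k) X)"
proof -
  define A where "A k = (hutchinson F ^^ k) X" for k
  have A_antimono: "m \<le> n \<Longrightarrow> A n \<subseteq> A m" for m n
    unfolding A_def using assms(3) by (rule hutchinson_iterates_antimono)
  have "f ` (\<Inter>k. A k) = (\<Inter>k. f ` A k)" if "f \<in> F" for f
    using assms(2)[OF that] by (intro image_INT[of _ UNIV]) auto
  then have "hutchinson F (\<Inter>k. A k) = (\<Union>f\<in>F. \<Inter>k. f ` A k)"
    unfolding hutchinson_def by simp
  also have "\<dots> = (\<Inter>k. hutchinson F (A k))"
    unfolding hutchinson_def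
    by (rule INT_UN_antimono_finite[symmetric, OF \<open>finite F\<close>]) (intro image_mono A_antimono)
  also have "\<dots> = (\<Inter>k. A (Suc k))" by (simp add: A_def)
  also have "\<dots> = (\<Inter>k. A k)"
  proof (intro equalityI subsetI)
    fix x assume "x \<in> (\<Inter>k. A (Suc k))"
    then have "x \<in> A k" for k using A_antimono[of k "Suc k"] by auto
    then show "x \<in> (\<Inter>k. A k)" by (rule INT_I)
  qed auto
  finally show ?thesis unfolding A_def .
qed

lemma attractor_of_injective_contractions:
  fixes F :: "(real \<Rightarrow> real) set" and X :: "real set"
  assumes "finite F" "F \<noteq> {}" and lip: "\<And>f. f \<in> F \<Longrightarrow> c-lipschitz_on UNIV f" and "c < 1"
    and inj: "\<And>f. f \<in> F \<Longrightarrow> inj f"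
    and X: "compact X" "X \<noteq> {}" "hutchinson F X \<subseteq> X"
  shows "compact (attractor F)" "attractor F \<noteq> {}" "attractor F \<subseteq> X"
    and "hutchinson F (attractor F) = attractor F"
proof -
  define A where "A k = (hutchinson F ^^ k) X" for k
  have A_compact: "compact (A k)" for k
    unfolding A_def using lip
    by (induction k) (auto intro: X(1) compact_hutchinson \<open>finite F\<close> lipschitz_on_continuous_on)
  have A_nonempty: "A k \<noteq> {}" for k
    unfolding A_def by (induction k) (use X(2) \<open>F \<noteq> {}\<close> in \<open>auto simp: hutchinson_def\<close>)
  have A_antimono: "m \<le> n \<Longrightarrow> A n \<subseteq> A m" for m n
    unfolding A_def using X(3) by (rule hutchinson_iterates_antimono)
  define K where "K = (\<Inter>k. A k)"
  have K_fixed: "hutchinson F K = K"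
    unfolding K_def A_def using \<open>finite F\<close> inj X(3) by (rule hutchinson_Inter_iterates)
  have K_compact: "compact K" unfolding K_def by (rule compact_Inter) (auto simp: A_compact)
  have K_nonempty: "K \<noteq> {}"
    unfolding K_def by (rule compact_nest) (use A_compact A_nonempty A_antimono in auto)
  have "attractor F = K"
    by (rule attractor_eqI[where F = F and c = c, OF lip \<open>c < 1\<close> K_compact K_nonempty K_fixed])
  moreover have "K \<subseteq> X" unfolding K_def using INT_lower[of 0 UNIV A] by (simp add: A_def)
  ultimately show "compact (attractor F)" "attractor F \<noteq> {}" "attractor F \<subseteq> X"
    "hutchinson F (attractor F) = attractor F"
    using K_compact K_nonempty K_fixed by simp_all
qed

lemma geometric_descent:
  fixes c t x :: real and A :: "real set"
  assumes "0 < c" "c < 1" "t \<le> 1" "x \<in> A" "0 < x"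
    and step: "\<And>y. y \<in> A \<Longrightarrow> y < t \<Longrightarrow> \<exists>z\<in>A. y = c * z"
  shows "\<exists>n. \<exists>z\<in>A. t \<le> z \<and> x = c ^ n * z"
proof -
  obtain N where "c ^ N < x" using real_arch_pow_inv[OF \<open>0 < x\<close> \<open>c < 1\<close>] by blast
  have "y \<in> A \<Longrightarrow> c ^ N < y \<Longrightarrow> \<exists>n. \<exists>z\<in>A. t \<le> z \<and> y = c ^ n * z" for y
  proof (induction N arbitrary: y)
    case 0
    then show ?case using \<open>t \<le> 1\<close> by (intro exI[of _ 0] bexI[of _ y]) auto
  next
    case (Suc N)
    show ?case
    proof (cases "t \<le> y")
      case True
      then show ?thesis using Suc.prems by (intro exI[of _ 0] bexI[of _ y]) auto
    next
      case False
      then obtain y' where y': "y' \<in> A" "y = c * y'" using step Suc.prems(1) by force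
      then have "c ^ N < y'" using Suc.prems(2) \<open>0 < c\<close> by simp
      then obtain n z where "z \<in> A" "t \<le> z" "y' = c ^ n * z" using Suc.IH y'(1) by blast
      then show ?thesis using y' by (intro exI[of _ "Suc n"] bexI[of _ z]) auto
    qed
  qed
  then show ?thesis using \<open>x \<in> A\<close> \<open>c ^ N < x\<close> by blast
qed

type_synonym param_map = "real \<Rightarrow> real \<Rightarrow> real \<Rightarrow> real \<Rightarrow> real"

definition S_family :: "param_map set" where
  "S_family = {S1, S2, S3, S4, S5, S6}"

lemma finite_S_family: "finite S_family"
  and card_S_family: "card S_family \<le> 6"
  unfolding S_family_def by (auto intro!: card_insert_le_m1)

lemma K_pqr_eq_attractor: "K_pqr p q r = attractor ((\<lambda>f. f p q r) ` S_family)"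
  by (simp add: K_pqr_def S_family_def)

lemma S_family_continuous:
  "f \<in> S_family \<Longrightarrow> continuous_on UNIV h \<Longrightarrow> continuous_on UNIV (\<lambda>z. f (fst z) (snd z) r (h z))"
  unfolding S_family_def
  by (auto simp: S1_def S2_def S3_def S4_def S5_def S6_def intro!: continuous_intros)

fun word_map :: "param_map list \<Rightarrow> real \<Rightarrow> real \<Rightarrow> real \<Rightarrow> real \<Rightarrow> real" where
  "word_map [] p q r x = x"
| "word_map (f # ws) p q r x = f p q r (word_map ws p q r x)"

definition words :: "nat \<Rightarrow> param_map list set" where
  "words k = {ws. set ws \<subseteq> S_family \<and> length ws = k}"

lemma finite_words: "finite (words k)"
  unfolding words_def by (rule finite_lists_length_eq[OF finite_S_family])

lemma card_words: "card (words k) \<le> 6 ^ k"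
  unfolding words_def card_lists_length_eq[OF finite_S_family]
  using card_S_family by (rule power_mono) simp

lemma word_map_continuous:
  "set ws \<subseteq> S_family \<Longrightarrow> continuous_on UNIV (\<lambda>z. word_map ws (fst z) (snd z) r s)"
  by (induction ws) (auto intro: S_family_continuous)

locale pqr_parameters =
  fixes p q r :: real
  assumes p: "0 < p" "p < r" and q: "0 < q" "q < r" and r: "r < 1/36"
begin

lemma S_family_unit_interval:
  assumes "f \<in> S_family" "x \<in> {0..1}"
  shows "f p q r x \<in> {0..1}"
proof -
  have bounds: "p * x \<le> p" "q * x \<le> q" "r * x \<le> r" "0 \<le> p * x" "0 \<le> q * x" "0 \<le> r * x"
    using assms(2) p q by (auto intro: mult_left_le)
  show ?thesis using assms(1) unfolding S_family_def
    by (auto simp: S1_def S2_def S3_def S4_def S5_def S6_def hh_def aa_def)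
      (use bounds p q r in linarith)+
qed

lemma S_family_lipschitz:
  assumes "f \<in> S_family"
  shows "r-lipschitz_on UNIV (f p q r)"
proof -
  have scale: "\<bar>c * x - c * y\<bar> = c * \<bar>x - y\<bar>" if "0 \<le> c" for c x y :: real
    using that by (simp add: abs_mult flip: right_diff_distrib)
  have "p * \<bar>x - y\<bar> \<le> r * \<bar>x - y\<bar>" "q * \<bar>x - y\<bar> \<le> r * \<bar>x - y\<bar>" for x y :: real
    using p q by (auto intro: mult_right_mono)
  then show ?thesis using assms p q scale[of p] scale[of q] scale[of r]
    unfolding S_family_def lipschitz_on_def dist_real_def
    by (auto simp: S1_def S2_def S3_def S4_def S5_def S6_def abs_minus_commute algebra_simps)
qed

lemma S_family_inj: "f \<in> S_family \<Longrightarrow> inj (f p q r)"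
  using p q unfolding S_family_def
  by (auto simp: inj_def S1_def S2_def S3_def S4_def S5_def S6_def)

lemma K_pqr_properties:
  shows K_pqr_compact: "compact (K_pqr p q r)"
    and K_pqr_nonempty: "K_pqr p q r \<noteq> {}"
    and K_pqr_unit_interval: "K_pqr p q r \<subseteq> {0..1}"
    and K_pqr_self_similar: "hutchinson ((\<lambda>f. f p q r) ` S_family) (K_pqr p q r) = K_pqr p q r"
proof -
  let ?F = "(\<lambda>f. f p q r) ` S_family"
  have fin: "finite ?F" using finite_S_family by simp
  have ne: "?F \<noteq> {}" by (simp add: S_family_def)
  have lip: "\<And>g. g \<in> ?F \<Longrightarrow> r-lipschitz_on UNIV g" using S_family_lipschitz by blast
  have inj: "\<And>g. g \<in> ?F \<Longrightarrow> inj g" using S_family_inj by blast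
  have "r < 1" using r by simp
  have unit: "compact {0..1::real}" "{0..1::real} \<noteq> {}" "hutchinson ?F {0..1} \<subseteq> {0..1}"
    using S_family_unit_interval unfolding hutchinson_def by auto
  show "compact (K_pqr p q r)" "K_pqr p q r \<noteq> {}" "K_pqr p q r \<subseteq> {0..1}"
      "hutchinson ?F (K_pqr p q r) = K_pqr p q r"
    unfolding K_pqr_eq_attractor
    using attractor_of_injective_contractions[OF fin ne lip \<open>r < 1\<close> inj unit] by simp_all
qed

lemma fixpoint_mem_K_pqr:
  assumes "f \<in> S_family" "f p q r x = x"
  shows "x \<in> K_pqr p q r"
proof -
  have "{x} \<subseteq> K_pqr p q r"
  proof (rule subset_of_contraction_invariant[where F = "(\<lambda>f. f p q r) ` S_family" and c = r])
    show "{x} \<subseteq> hutchinson ((\<lambda>f. f p q r) ` S_family) {x}"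
      using assms unfolding hutchinson_def by (auto intro!: bexI[of _ f])
  qed (use S_family_lipschitz r K_pqr_compact K_pqr_nonempty K_pqr_self_similar in
      \<open>auto simp: compact_imp_bounded compact_imp_closed\<close>)
  then show ?thesis by simp
qed

lemma zero_mem_K_pqr: "0 \<in> K_pqr p q r"
  by (rule fixpoint_mem_K_pqr[of S1]) (simp_all add: S_family_def S1_def)

lemma one_mem_K_pqr: "1 \<in> K_pqr p q r"
  by (rule fixpoint_mem_K_pqr[of S6]) (simp_all add: S_family_def S6_def)

lemma word_map_unit_interval:
  "set ws \<subseteq> S_family \<Longrightarrow> x \<in> {0..1} \<Longrightarrow> word_map ws p q r x \<in> {0..1}"
proof (induction ws)
  case (Cons f ws)
  then show ?case using S_family_unit_interval[of f "word_map ws p q r x"] by simp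
qed simp

lemma word_map_lipschitz:
  "set ws \<subseteq> S_family \<Longrightarrow> \<bar>word_map ws p q r x - word_map ws p q r y\<bar> \<le> r ^ length ws * \<bar>x - y\<bar>"
proof (induction ws)
  case (Cons f ws)
  then have "\<bar>word_map (f # ws) p q r x - word_map (f # ws) p q r y\<bar>
      \<le> r * \<bar>word_map ws p q r x - word_map ws p q r y\<bar>"
    using S_family_lipschitz[of f] by (simp add: lipschitz_on_def dist_real_def)
  also have "\<dots> \<le> r * (r ^ length ws * \<bar>x - y\<bar>)"
    using Cons p by (intro mult_left_mono) auto
  finally show ?case by simp
qed simp

lemma K_pqr_word_decomposition:
  "x \<in> K_pqr p q r \<Longrightarrow> \<exists>ws\<in>words k. \<exists>s\<in>K_pqr p q r. x = word_map ws p q r s"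
proof (induction k arbitrary: x)
  case 0
  then show ?case by (auto simp: words_def)
next
  case (Suc k)
  then obtain f y where f: "f \<in> S_family" "y \<in> K_pqr p q r" "x = f p q r y"
    using K_pqr_self_similar unfolding hutchinson_def by blast
  then obtain ws s where "ws \<in> words k" "s \<in> K_pqr p q r" "y = word_map ws p q r s"
    using Suc.IH by blast
  with f show ?case by (intro bexI[of _ "f # ws"] bexI[of _ s]) (auto simp: words_def)
qed

lemma K_pqr_near_word_image_of_0:
  assumes "x \<in> K_pqr p q r"
  shows "\<exists>ws\<in>words k. \<bar>word_map ws p q r 0 - x\<bar> \<le> r ^ k"
proof -
  obtain ws s where ws: "ws \<in> words k" "s \<in> K_pqr p q r" "x = word_map ws p q r s"
    using K_pqr_word_decomposition[OF assms] by blast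
  have "\<bar>word_map ws p q r 0 - x\<bar> \<le> r ^ k * \<bar>0 - s\<bar>"
    using word_map_lipschitz[of ws 0 s] ws by (simp add: words_def)
  also have "\<dots> \<le> r ^ k"
    using ws(2) K_pqr_unit_interval p by (intro mult_left_le) auto
  finally show ?thesis using ws(1) by blast
qed

lemma K_pqr_below_aa:
  assumes "x \<in> K_pqr p q r" "x < aa"
  shows "\<exists>y\<in>K_pqr p q r. x = p * y"
proof -
  obtain f y where f: "f \<in> S_family" "y \<in> K_pqr p q r" "x = f p q r y"
    using assms(1) K_pqr_self_similar unfolding hutchinson_def by blast
  have bounds: "q * y \<le> q" "r * y \<le> r" "0 \<le> r * y"
    using f(2) K_pqr_unit_interval q p by (auto intro: mult_left_le)
  have "f = S1" using f assms(2) unfolding S_family_def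
    by (auto simp: S2_def S3_def S4_def S5_def S6_def hh_def aa_def) (use bounds q r in linarith)+
  then show ?thesis using f by (auto simp: S1_def)
qed

lemma K_pqr_above_one_minus_aa:
  assumes "y \<in> K_pqr p q r" "1 - y < aa"
  shows "\<exists>z\<in>K_pqr p q r. 1 - y = r * (1 - z)"
proof -
  obtain f z where f: "f \<in> S_family" "z \<in> K_pqr p q r" "y = f p q r z"
    using assms(1) K_pqr_self_similar unfolding hutchinson_def by blast
  have bounds: "p * z \<le> p" "q * z \<le> q" "r * z \<le> r" "0 \<le> q * z" "0 \<le> r * z"
    using f(2) K_pqr_unit_interval q p by (auto intro: mult_left_le)
  have "f = S6" using f assms(2) unfolding S_family_def
    by (auto simp: S1_def S2_def S3_def S4_def S5_def hh_def aa_def) (use bounds p q r in linarith)+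
  then show ?thesis using f by (auto simp: S6_def algebra_simps)
qed

lemma coincidence_of_not_unique_one_point:
  assumes "\<not> unique_one_point p q r"
  obtains n m x y where "x \<in> K_pqr p q r" "aa \<le> x" "y \<in> K_pqr p q r" "y \<le> 1 - aa"
    and "q * p ^ n * x = r ^ Suc m * (1 - y)"
proof -
  have "hh \<in> S3 p q r ` K_pqr p q r" using zero_mem_K_pqr by (force simp: S3_def)
  moreover have "hh \<in> S4 p q r ` K_pqr p q r" using one_mem_K_pqr by (force simp: S4_def)
  ultimately obtain x0 y0 where xy0: "x0 \<in> K_pqr p q r" "y0 \<in> K_pqr p q r"
    and "S3 p q r x0 = S4 p q r y0" "S3 p q r x0 \<noteq> hh"
    using assms unfolding unique_one_point_def by blast
  then have coincidence: "q * x0 = r * (1 - y0)" and "x0 \<noteq> 0"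
    by (auto simp: S3_def S4_def algebra_simps)
  then have "0 < x0" using xy0(1) K_pqr_unit_interval by force
  then have "0 < r * (1 - y0)" using coincidence q by (metis mult_pos_pos)
  then have "0 < 1 - y0" using p by (simp add: zero_less_mult_iff)
  have "\<exists>n. \<exists>x\<in>K_pqr p q r. aa \<le> x \<and> x0 = p ^ n * x"
    by (rule geometric_descent) (use p r xy0 \<open>0 < x0\<close> K_pqr_below_aa in \<open>auto simp: aa_def\<close>)
  then obtain n x where x: "x \<in> K_pqr p q r" "aa \<le> x" "x0 = p ^ n * x" by blast
  have "\<exists>m. \<exists>u\<in>(\<lambda>y. 1 - y) ` K_pqr p q r. aa \<le> u \<and> 1 - y0 = r ^ m * u"
  proof (rule geometric_descent)
    fix u assume "u \<in> (\<lambda>y. 1 - y) ` K_pqr p q r" "u < aa"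
    then show "\<exists>z\<in>(\<lambda>y. 1 - y) ` K_pqr p q r. u = r * z" using K_pqr_above_one_minus_aa by blast
  qed (use p r xy0 \<open>0 < 1 - y0\<close> in \<open>auto simp: aa_def\<close>)
  then obtain m u where u: "u \<in> (\<lambda>y. 1 - y) ` K_pqr p q r" "aa \<le> u" "1 - y0 = r ^ m * u"
    by blast
  then obtain y where y: "y \<in> K_pqr p q r" "y \<le> 1 - aa" "1 - y0 = r ^ m * (1 - y)"
    by force
  have "q * p ^ n * x = r ^ Suc m * (1 - y)"
    using coincidence x(3) y(3) by (simp add: algebra_simps)
  with x y show ?thesis using that by blast
qed

end

lemma S_family_q_perturbation:
  assumes "pqr_parameters p q r" "pqr_parameters p q' r" "f \<in> S_family" "x \<in> {0..1}"
  shows "\<bar>f p q' r y - f p q r x\<bar> \<le> r * \<bar>y - x\<bar> + \<bar>q' - q\<bar>"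
proof -
  have "\<bar>f p q' r y - f p q' r x\<bar> \<le> r * \<bar>y - x\<bar>"
    using pqr_parameters.S_family_lipschitz[OF assms(2,3)] by (simp add: lipschitz_on_def dist_real_def)
  moreover have "\<bar>f p q' r x - f p q r x\<bar> \<le> \<bar>q' - q\<bar>"
  proof -
    have "\<bar>q' * x - q * x\<bar> \<le> \<bar>q' - q\<bar>"
      using assms(4) by (simp add: abs_mult mult_left_le flip: left_diff_distrib)
    then show ?thesis using assms(3) unfolding S_family_def
      by (auto simp: S1_def S2_def S3_def S4_def S5_def S6_def abs_minus_commute algebra_simps)
  qed
  ultimately show ?thesis by linarith
qed

text \<open>The constant \<open>36/35 = 1 / (1 - 1/36)\<close> bounds the geometric series of the
  \<open>q\<close>-derivatives of the factors.\<close>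
lemma word_map_q_lipschitz:
  assumes "pqr_parameters p q r" "pqr_parameters p q' r" "set ws \<subseteq> S_family" "x \<in> {0..1}"
  shows "\<bar>word_map ws p q' r x - word_map ws p q r x\<bar> \<le> 36/35 * \<bar>q' - q\<bar>"
  using assms(3)
proof (induction ws)
  case (Cons f ws)
  have "word_map ws p q r x \<in> {0..1}"
    using pqr_parameters.word_map_unit_interval[OF assms(1)] Cons.prems assms(4) by simp
  then have "\<bar>word_map (f # ws) p q' r x - word_map (f # ws) p q r x\<bar>
      \<le> r * \<bar>word_map ws p q' r x - word_map ws p q r x\<bar> + \<bar>q' - q\<bar>"
    using S_family_q_perturbation[OF assms(1,2)] Cons.prems by simp
  also have "\<dots> \<le> 1/36 * (36/35 * \<bar>q' - q\<bar>) + \<bar>q' - q\<bar>"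
    using Cons assms(1) unfolding pqr_parameters_def by (intro add_right_mono mult_mono) auto
  finally show ?case by simp
qed simp

text \<open>The two near-solutions differ by \<open>D P x' + q P (x' - x) + R (y' - y) \<ge> D P / 50\<close>.\<close>
lemma transversality_estimate:
  fixes P D q R x x' y y' E :: real
  assumes "0 < P" "0 < D" "0 < q" "q < 1/36" "0 \<le> R" "R \<le> 5 * q * P"
    and x'_lower: "1/5 - 1/1296 \<le> x'"
    and x_diff: "\<bar>x' - x\<bar> \<le> 36/35 * D" and y_diff: "\<bar>y' - y\<bar> \<le> 36/35 * D"
    and near: "\<bar>q * P * x - R * (1 - y)\<bar> \<le> E" and near': "\<bar>(q + D) * P * x' - R * (1 - y')\<bar> \<le> E"
  shows "D * P \<le> 100 * E"
proof -
  have "(1291/6480) * (D * P) \<le> D * P * x'"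
    using x'_lower assms(1,2) by (simp add: mult_left_mono mult.commute)
  moreover have "- (36/35) * (q * P * D) \<le> q * P * (x' - x)"
  proof -
    have "-(36/35 * D) \<le> x' - x" using x_diff abs_ge_minus_self[of "x' - x"] by linarith
    then have "q * P * (-(36/35 * D)) \<le> q * P * (x' - x)"
      using assms(1,3) by (intro mult_left_mono) auto
    then show ?thesis by (simp add: algebra_simps)
  qed
  moreover have "- (36/7) * (q * P * D) \<le> R * (y' - y)"
  proof -
    have "-(36/35 * D) \<le> y' - y" using y_diff abs_ge_minus_self[of "y' - y"] by linarith
    then have "R * (-(36/35 * D)) \<le> R * (y' - y)"
      using assms(5) by (intro mult_left_mono) auto
    moreover have "R * (36/35 * D) \<le> (5 * q * P) * (36/35 * D)"
      using assms(2,6) by (intro mult_right_mono) auto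
    ultimately show ?thesis by (simp add: algebra_simps)
  qed
  moreover have "q * P * D \<le> (D * P) / 36"
    using assms(1-4) by (simp add: mult.commute mult_left_mono)
  moreover have "(q + D) * P * x' - R * (1 - y') - (q * P * x - R * (1 - y))
      = D * P * x' + q * P * (x' - x) + R * (y' - y)"
    by (simp add: algebra_simps)
  ultimately show ?thesis using near near' by (simp add: abs_le_iff)
qed

text \<open>The tolerance comes from
  \<open>approximate_solution_bound\<close> with \<open>\<rho> = r^k\<close> and \<open>q < r\<close>.\<close>
definition coincidence_cell ::
    "real \<Rightarrow> nat \<Rightarrow> nat \<Rightarrow> nat \<Rightarrow> param_map list \<Rightarrow> param_map list \<Rightarrow> (real \<times> real) set" where
  "coincidence_cell r n m k v w = {(p, q). pqr_parameters p q r \<and> r ^ Suc m \<le> 5 * q * p ^ n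
      \<and> aa - r ^ k \<le> word_map v p q r 0
      \<and> \<bar>q * p ^ n * word_map v p q r 0 - r ^ Suc m * (1 - word_map w p q r 0)\<bar> \<le> 6 * p ^ n * r ^ Suc k}"

lemma coincidence_cell_borel:
  assumes "set v \<subseteq> S_family" "set w \<subseteq> S_family"
  shows "coincidence_cell r n m k v w \<in> sets borel"
proof -
  have cv: "continuous_on UNIV (\<lambda>z. word_map v (fst z) (snd z) r 0)"
    and cw: "continuous_on UNIV (\<lambda>z. word_map w (fst z) (snd z) r 0)"
    using assms by (simp_all add: word_map_continuous)
  have eq: "coincidence_cell r n m k v w = {z. pqr_parameters (fst z) (snd z) r}
      \<inter> {z. r ^ Suc m \<le> 5 * snd z * fst z ^ n}
      \<inter> {z. aa - r ^ k \<le> word_map v (fst z) (snd z) r 0}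
      \<inter> {z. \<bar>snd z * fst z ^ n * word_map v (fst z) (snd z) r 0
              - r ^ Suc m * (1 - word_map w (fst z) (snd z) r 0)\<bar> \<le> 6 * fst z ^ n * r ^ Suc k}"
    unfolding coincidence_cell_def by auto
  have par: "{z. pqr_parameters (fst z) (snd z) r} \<in> sets borel"
  proof (cases "r < 1/36")
    case True
    then have "{z. pqr_parameters (fst z) (snd z) r} = {0<..<r} \<times> {0<..<r}"
      by (auto simp: pqr_parameters_def)
    then show ?thesis by (simp add: open_Times borel_open)
  qed (simp add: pqr_parameters_def)
  show ?thesis
    unfolding eq by (intro sets.Int par borel_closed closed_Collect_le continuous_intros cv cw)
qed

lemma coincidence_cell_section_diameter:
  assumes "set v \<subseteq> S_family" "set w \<subseteq> S_family" "2 \<le> k"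
    and q1: "(p, q1) \<in> coincidence_cell r n m k v w" and q2: "(p, q2) \<in> coincidence_cell r n m k v w"
    and "q1 < q2"
  shows "q2 - q1 \<le> 600 * r ^ Suc k"
proof -
  have par1: "pqr_parameters p q1 r" and par2: "pqr_parameters p q2 r" using q1 q2 by (simp_all add: coincidence_cell_def)
  then have p: "0 < p" "p < r" and "0 < q1" "q1 < r" "r < 1/36" by (simp_all add: pqr_parameters_def)
  have "r ^ k \<le> r ^ 2" using p \<open>r < 1/36\<close> \<open>2 \<le> k\<close> by (intro power_decreasing) auto
  also have "\<dots> \<le> (1/36) ^ 2" using p \<open>r < 1/36\<close> by (intro power_mono) auto
  finally have "r ^ k \<le> 1/1296" by (simp add: power2_eq_square)
  moreover have "aa - r ^ k \<le> word_map v p q2 r 0" using q2 by (simp add: coincidence_cell_def)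
  ultimately have "1/5 - 1/1296 \<le> word_map v p q2 r 0" unfolding aa_def by linarith
  then have "(q2 - q1) * p ^ n \<le> 100 * (6 * p ^ n * r ^ Suc k)"
    using q1 q2 p \<open>0 < q1\<close> \<open>q1 < r\<close> \<open>r < 1/36\<close> \<open>q1 < q2\<close>
      word_map_q_lipschitz[OF par1 par2 assms(1), of 0] word_map_q_lipschitz[OF par1 par2 assms(2), of 0]
    by (intro transversality_estimate[where q = q1 and R = "r ^ Suc m"
          and y = "word_map w p q1 r 0" and y' = "word_map w p q2 r 0"])
      (auto simp: coincidence_cell_def)
  then have "(q2 - q1) * p ^ n \<le> (600 * r ^ Suc k) * p ^ n" by (simp add: ac_simps)
  then show ?thesis using p by (simp add: mult_le_cancel_right)
qed

lemma coincidence_cell_section_measure: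
  assumes "set v \<subseteq> S_family" "set w \<subseteq> S_family" "2 \<le> k"
  shows "emeasure lborel (Pair p -` coincidence_cell r n m k v w) \<le> ennreal (1200 * r ^ Suc k)"
proof (cases "Pair p -` coincidence_cell r n m k v w = {}")
  case False
  then obtain q0 where q0: "(p, q0) \<in> coincidence_cell r n m k v w" by auto
  define d where "d = 600 * r ^ Suc k"
  have "Pair p -` coincidence_cell r n m k v w \<subseteq> {q0 - d .. q0 + d}"
  proof
    fix q assume "q \<in> Pair p -` coincidence_cell r n m k v w"
    then have q: "(p, q) \<in> coincidence_cell r n m k v w" by simp
    have "0 \<le> d" using q0 by (simp add: d_def coincidence_cell_def pqr_parameters_def)
    then show "q \<in> {q0 - d .. q0 + d}"
      using coincidence_cell_section_diameter[OF assms q q0] coincidence_cell_section_diameter[OF assms q0 q]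
      unfolding d_def by (cases q q0 rule: linorder_cases) auto
  qed
  then have "emeasure lborel (Pair p -` coincidence_cell r n m k v w) \<le> emeasure lborel {q0 - d .. q0 + d}"
    by (rule emeasure_mono) simp
  also have "\<dots> = ennreal (1200 * r ^ Suc k)"
    using q0 by (simp add: d_def coincidence_cell_def pqr_parameters_def)
  finally show ?thesis .
qed simp

lemma sets_borel_vimage_Pair:
  fixes N :: "('a::euclidean_space \<times> 'b::euclidean_space) set"
  assumes "N \<in> sets borel"
  shows "Pair x -` N \<in> sets borel"
proof (rule sets_Pair1[of N borel borel])
  show "N \<in> sets (borel \<Otimes>\<^sub>M borel)" unfolding borel_prod by (rule assms)
qed

definition coincidence_cover :: "real \<Rightarrow> nat \<Rightarrow> nat \<Rightarrow> nat \<Rightarrow> (real \<times> real) set" where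
  "coincidence_cover r n m k = (\<Union>(v, w) \<in> words k \<times> words k. coincidence_cell r n m k v w)"

lemma coincidence_cover_borel: "coincidence_cover r n m k \<in> sets borel"
  unfolding coincidence_cover_def
  by (intro sets.finite_UN finite_cartesian_product finite_words)
    (auto simp: words_def intro: coincidence_cell_borel)

lemma coincidence_cover_section_measure:
  assumes "0 < r" "2 \<le> k"
  shows "emeasure lborel (Pair p -` coincidence_cover r n m k) \<le> ennreal (1200 * r * (36 * r) ^ k)"
proof -
  have sets: "Pair p -` coincidence_cell r n m k v w \<in> sets borel"
    if "v \<in> words k" "w \<in> words k" for v w
    using that by (intro sets_borel_vimage_Pair coincidence_cell_borel) (auto simp: words_def)
  have "emeasure lborel (Pair p -` coincidence_cover r n m k)
      \<le> (\<Sum>(v, w) \<in> words k \<times> words k. emeasure lborel (Pair p -` coincidence_cell r n m k v w))"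
    unfolding coincidence_cover_def vimage_UN
    by (rule order_trans[OF emeasure_subadditive_finite]) (auto simp: finite_words sets split_beta)
  also have "\<dots> \<le> (\<Sum>(v, w) \<in> words k \<times> words k. ennreal (1200 * r ^ Suc k))"
    using coincidence_cell_section_measure \<open>2 \<le> k\<close> by (intro sum_mono) (auto simp: words_def)
  also have "\<dots> = ennreal (card (words k) ^ 2 * (1200 * r ^ Suc k))"
    using \<open>0 < r\<close> by (simp add: card_cartesian_product power2_eq_square ennreal_mult ennreal_of_nat_eq_real_of_nat)
  also have "\<dots> \<le> ennreal (36 ^ k * (1200 * r ^ Suc k))"
  proof (intro ennreal_leI mult_right_mono)
    have "card (words k) ^ 2 \<le> (6 ^ k) ^ 2" using card_words by (rule power_mono) simp
    also have "(6 ^ k) ^ 2 = (36 :: nat) ^ k"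
      by (simp add: power2_eq_square flip: power_mult_distrib)
    finally show "real (card (words k) ^ 2) \<le> 36 ^ k"
      by (metis of_nat_le_iff of_nat_numeral of_nat_power)
  qed (use \<open>0 < r\<close> in simp)
  also have "36 ^ k * (1200 * r ^ Suc k) = 1200 * r * (36 * r) ^ k"
    by (simp add: power_mult_distrib)
  finally show ?thesis .
qed

definition exceptional_set :: "real \<Rightarrow> (real \<times> real) set" where
  "exceptional_set r = (\<Union>n m. \<Inter>k\<in>{2..}. coincidence_cover r n m k)"

lemma exceptional_set_borel: "exceptional_set r \<in> sets borel"
  unfolding exceptional_set_def
  by (intro sets.countable_UN'' sets.countable_INT'') (auto simp: coincidence_cover_borel)

lemma null_sets_if_geometric_bound:
  assumes "A \<in> sets M" "0 \<le> t" "t < 1" and bound: "\<And>k. N \<le> k \<Longrightarrow> emeasure M A \<le> ennreal (C * t ^ k)"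
  shows "A \<in> null_sets M"
proof -
  have "(\<lambda>k. ennreal (C * t ^ k)) \<longlonglongrightarrow> ennreal 0"
    using assms(2,3) by (intro tendsto_ennrealI tendsto_mult_right_zero LIMSEQ_power_zero) auto
  moreover have "eventually (\<lambda>k. emeasure M A \<le> ennreal (C * t ^ k)) sequentially"
    using eventually_ge_at_top[of N] by eventually_elim (rule bound)
  ultimately have "emeasure M A \<le> ennreal 0"
    by (rule tendsto_le[OF trivial_limit_sequentially _ tendsto_const])
  then show ?thesis using assms(1) by (simp add: null_setsI)
qed

lemma null_sets_lborel_of_null_sections:
  fixes N :: "('a::euclidean_space \<times> 'b::euclidean_space) set"
  assumes "N \<in> sets borel" and sections: "\<And>x. Pair x -` N \<in> null_sets lborel"
  shows "N \<in> null_sets lborel"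
proof -
  have N: "N \<in> sets (lborel \<Otimes>\<^sub>M lborel)" using assms(1) by (simp only: lborel_prod sets_lborel)
  have "emeasure (lborel \<Otimes>\<^sub>M lborel) N = (\<integral>\<^sup>+x. emeasure lborel (Pair x -` N) \<partial>lborel)"
    by (rule lborel.emeasure_pair_measure_alt[OF N])
  also have "\<dots> = 0" using null_setsD1[OF sections] by simp
  finally have "N \<in> null_sets (lborel \<Otimes>\<^sub>M lborel)" using N by (simp add: null_setsI)
  then show ?thesis by (simp only: lborel_prod)
qed

lemma exceptional_set_section_null:
  assumes "0 < r" "r < 1/36"
  shows "Pair p -` exceptional_set r \<in> null_sets lborel"
proof -
  have "Pair p -` (\<Inter>k\<in>{2..}. coincidence_cover r n m k) \<in> null_sets lborel" for n m
  proof (rule null_sets_if_geometric_bound[where t = "36 * r" and C = "1200 * r" and N = 2])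
    have cover: "Pair p -` coincidence_cover r n m k \<in> sets lborel" for k
      using sets_borel_vimage_Pair[OF coincidence_cover_borel] by simp
    then show "Pair p -` (\<Inter>k\<in>{2..}. coincidence_cover r n m k) \<in> sets lborel"
      unfolding vimage_INT by (intro sets.countable_INT'') auto
    fix k :: nat assume "2 \<le> k"
    then have "emeasure lborel (Pair p -` (\<Inter>k\<in>{2..}. coincidence_cover r n m k))
        \<le> emeasure lborel (Pair p -` coincidence_cover r n m k)"
      using cover by (intro emeasure_mono) auto
    also have "\<dots> \<le> ennreal (1200 * r * (36 * r) ^ k)"
      by (rule coincidence_cover_section_measure[OF \<open>0 < r\<close> \<open>2 \<le> k\<close>])
    finally show "emeasure lborel (Pair p -` (\<Inter>k\<in>{2..}. coincidence_cover r n m k))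
        \<le> ennreal (1200 * r * (36 * r) ^ k)" .
  qed (use assms in auto)
  then show ?thesis unfolding exceptional_set_def vimage_UN by (intro null_sets_UN)
qed

lemma approximate_solution_bound:
  fixes Q R x y x' y' \<rho> :: real
  assumes "0 \<le> Q" "0 \<le> R" "Q * x = R * (1 - y)" "x \<le> 1" "1/5 \<le> 1 - y"
    and "\<bar>x' - x\<bar> \<le> \<rho>" "\<bar>y' - y\<bar> \<le> \<rho>"
  shows "R \<le> 5 * Q" "\<bar>Q * x' - R * (1 - y')\<bar> \<le> 6 * Q * \<rho>"
proof -
  have "R * (1/5) \<le> R * (1 - y)" using assms by (intro mult_left_mono) auto
  also have "\<dots> = Q * x" using assms by simp
  also have "\<dots> \<le> Q * 1" using assms by (intro mult_left_mono) auto
  finally show R: "R \<le> 5 * Q" by simp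
  have "Q * x' - R * (1 - y') = Q * (x' - x) + R * (y' - y)" using assms(3) by (simp add: algebra_simps)
  then have "\<bar>Q * x' - R * (1 - y')\<bar> \<le> Q * \<bar>x' - x\<bar> + R * \<bar>y' - y\<bar>"
    using assms(1,2) by (simp add: abs_mult abs_triangle_ineq order_trans[OF abs_triangle_ineq])
  also have "\<dots> \<le> Q * \<rho> + (5 * Q) * \<rho>"
    using assms R by (intro add_mono mult_mono) auto
  finally show "\<bar>Q * x' - R * (1 - y')\<bar> \<le> 6 * Q * \<rho>" by simp
qed

lemma (in pqr_parameters) not_unique_one_point_mem_exceptional_set:
  assumes "\<not> unique_one_point p q r"
  shows "(p, q) \<in> exceptional_set r"
proof -
  obtain n m x y where x: "x \<in> K_pqr p q r" "aa \<le> x" and y: "y \<in> K_pqr p q r" "y \<le> 1 - aa"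
    and coincidence: "q * p ^ n * x = r ^ Suc m * (1 - y)"
    using coincidence_of_not_unique_one_point[OF assms] .
  have "(p, q) \<in> coincidence_cover r n m k" for k
  proof -
    obtain v where v: "v \<in> words k" "\<bar>word_map v p q r 0 - x\<bar> \<le> r ^ k"
      using K_pqr_near_word_image_of_0[OF x(1)] by blast
    obtain w where w: "w \<in> words k" "\<bar>word_map w p q r 0 - y\<bar> \<le> r ^ k"
      using K_pqr_near_word_image_of_0[OF y(1)] by blast
    have "x \<le> 1" using x(1) K_pqr_unit_interval by auto
    then have "r ^ Suc m \<le> 5 * (q * p ^ n)"
      and "\<bar>q * p ^ n * word_map v p q r 0 - r ^ Suc m * (1 - word_map w p q r 0)\<bar>
        \<le> 6 * (q * p ^ n) * r ^ k"
      using approximate_solution_bound[OF _ _ coincidence _ _ v(2) w(2)] y(2) p q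
      by (auto simp: aa_def)
    moreover have "6 * (q * p ^ n) * r ^ k \<le> 6 * p ^ n * r ^ Suc k"
      using p q by (simp add: mult_right_mono mult_left_mono algebra_simps)
    moreover have "aa - r ^ k \<le> word_map v p q r 0" using v(2) x(2) by (simp add: abs_le_iff)
    moreover have "pqr_parameters p q r" using p q r by (simp add: pqr_parameters_def)
    ultimately have "(p, q) \<in> coincidence_cell r n m k v w"
      unfolding coincidence_cell_def by (simp add: mult.assoc)
    then show ?thesis unfolding coincidence_cover_def using v(1) w(1) by blast
  qed
  then show ?thesis unfolding exceptional_set_def by blast
qed

theorem theorem4:
  fixes r :: real
  assumes "0 < r" "r < 1/36"
  shows "{(p, q) \<in> {0<..<r} \<times> {0<..<r}. \<not> unique_one_point p q r} \<in> null_sets lebesgue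
    \<and> (\<forall>p \<in> {0<..<r}. {q \<in> {0<..<r}. \<not> unique_one_point p q r} \<in> null_sets lebesgue)"
proof -
  have null: "exceptional_set r \<in> null_sets lborel"
    using exceptional_set_borel exceptional_set_section_null[OF assms]
    by (rule null_sets_lborel_of_null_sections)
  have exceptional: "(p, q) \<in> exceptional_set r"
    if "p \<in> {0<..<r}" "q \<in> {0<..<r}" "\<not> unique_one_point p q r" for p q
    using pqr_parameters.not_unique_one_point_mem_exceptional_set[of p q r] that assms
    by (simp add: pqr_parameters_def)
  show ?thesis
  proof (intro conjI ballI)
    have "{(p, q) \<in> {0<..<r} \<times> {0<..<r}. \<not> unique_one_point p q r} \<subseteq> exceptional_set r"
      using exceptional by auto
    then show "{(p, q) \<in> {0<..<r} \<times> {0<..<r}. \<not> unique_one_point p q r} \<in> null_sets lebesgue"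
      by (rule null_sets_completion_subset[OF _ null_sets_completionI[OF null]])
  next
    fix p assume "p \<in> {0<..<r}"
    then have "{q \<in> {0<..<r}. \<not> unique_one_point p q r} \<subseteq> Pair p -` exceptional_set r"
      using exceptional by auto
    then show "{q \<in> {0<..<r}. \<not> unique_one_point p q r} \<in> null_sets lebesgue"
      by (rule null_sets_completion_subset[OF _ null_sets_completionI[OF exceptional_set_section_null[OF assms]]])
  qed
qed

end
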